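(* Let $X(\mathbb{R}^n)$ be a Banach function space with absolutely continuous norm. Then $X(\mathbb{R}^n)$ has the bounded $L^2$-approximation property.
   Context: Banach function spaces: let $\mathfrak{M}^+(\mathbb{R}^n)$ be the set of measurable functions with values in $[0,\infty]$. A Banach function norm $\rho:\mathfrak{M}^+\to[0,\infty]$ satisfies, for all $f,g,f_j\in\mathfrak{M}^+$, $a\ge0$, measurable $E$: (A1) $\rho(f)=0\iff f=0$ a.e., $\rho(af)=a\rho(f)$, $\rho(f+g)\le\rho(f)+\rho(g)$; (A2) $0\le g\le f$ a.e. implies $\rho(g)\le\rho(f)$; (A3) $0\le f_j\uparrow f$ a.e. implies $\rho(f_j)\uparrow\rho(f)$; (A4) $|E|<\infty$ implies $\rho(\chi_E)<\infty$; (A5) $|E|<\infty$ implies $\int_Ef\le C_E\rho(f)$ with $C_E$ independent of $f$. $X(\mathbb{R}^n)$ is the set of measurable complex $f$ with $\rho(|f|)<\infty$, $\|f\|_X=\rho(|f|)$. $X$ has absolutely continuous norm if for every $f\in X$ and every sequence of measurable sets $E_j$ with $\chi_{E_j}\to0$ a.e., $\|f\chi_{E_j}\|_X\to0$. Bounded $L^2$-approximation property: for every $u\in L^2(\mathbb{R}^n)\cap X(\mathbb{R}^n)$ there is a sequence $u_j\in C_0^\infty(\mathbb{R}^n)$ with $\|u-u_j\|_{L^2(\mathbb{R}^n)}\to0$ and $\limsup_j\|u_j\|_X\le\|u\|_X$. *)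

theory Defs
  imports "HOL-Analysis.Analysis" "HOL-Library.Liminf_Limsup"
begin

text \<open>Functions on R^n are modelled on an arbitrary Euclidean space 'a (n = DIM('a)),
  with Lebesgue measure. The class M^+ consists of Lebesgue measurable functions
  with values in [0,\<infinity>], i.e. ennreal-valued.\<close>

definition banach_function_norm :: "(('a::euclidean_space \<Rightarrow> ennreal) \<Rightarrow> ennreal) \<Rightarrow> bool" where
  "banach_function_norm \<rho> \<longleftrightarrow>
    \<comment> \<open>(A1)\<close>
    (\<forall>f \<in> borel_measurable lebesgue. \<rho> f = 0 \<longleftrightarrow> (AE x in lebesgue. f x = 0)) \<and>
    (\<forall>f \<in> borel_measurable lebesgue. \<forall>a::real. a \<ge> 0 \<longrightarrow>
        \<rho> (\<lambda>x. ennreal a * f x) = ennreal a * \<rho> f) \<and>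
    (\<forall>f \<in> borel_measurable lebesgue. \<forall>g \<in> borel_measurable lebesgue.
        \<rho> (\<lambda>x. f x + g x) \<le> \<rho> f + \<rho> g) \<and>
    \<comment> \<open>(A2)\<close>
    (\<forall>f \<in> borel_measurable lebesgue. \<forall>g \<in> borel_measurable lebesgue.
        (AE x in lebesgue. g x \<le> f x) \<longrightarrow> \<rho> g \<le> \<rho> f) \<and>
    \<comment> \<open>(A3)\<close>
    (\<forall>f \<in> borel_measurable lebesgue. \<forall>F :: nat \<Rightarrow> 'a \<Rightarrow> ennreal.
        (\<forall>j. F j \<in> borel_measurable lebesgue) \<longrightarrow>
        (AE x in lebesgue. incseq (\<lambda>j. F j x) \<and> (\<lambda>j. F j x) \<longlonglongrightarrow> f x) \<longrightarrow>
        incseq (\<lambda>j. \<rho> (F j)) \<and> (\<lambda>j. \<rho> (F j)) \<longlonglongrightarrow> \<rho> f) \<and>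
    \<comment> \<open>(A4)\<close>
    (\<forall>E \<in> sets lebesgue. emeasure lebesgue E < \<infinity> \<longrightarrow> \<rho> (indicator E) < \<infinity>) \<and>
    \<comment> \<open>(A5)\<close>
    (\<forall>E \<in> sets lebesgue. emeasure lebesgue E < \<infinity> \<longrightarrow>
        (\<exists>C::real. \<forall>f \<in> borel_measurable lebesgue.
           (\<integral>\<^sup>+ x \<in> E. f x \<partial>lebesgue) \<le> ennreal C * \<rho> f))"

definition in_BFS :: "(('a::euclidean_space \<Rightarrow> ennreal) \<Rightarrow> ennreal) \<Rightarrow> ('a \<Rightarrow> complex) \<Rightarrow> bool" where
  "in_BFS \<rho> f \<longleftrightarrow> f \<in> borel_measurable lebesgue \<and> \<rho> (\<lambda>x. ennreal (cmod (f x))) < \<infinity>"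

definition BFS_norm :: "(('a::euclidean_space \<Rightarrow> ennreal) \<Rightarrow> ennreal) \<Rightarrow> ('a \<Rightarrow> complex) \<Rightarrow> ennreal" where
  "BFS_norm \<rho> f = \<rho> (\<lambda>x. ennreal (cmod (f x)))"

definition abs_cont_norm :: "(('a::euclidean_space \<Rightarrow> ennreal) \<Rightarrow> ennreal) \<Rightarrow> bool" where
  "abs_cont_norm \<rho> \<longleftrightarrow>
    (\<forall>f E. in_BFS \<rho> f \<longrightarrow> (\<forall>j. E j \<in> sets lebesgue) \<longrightarrow>
       (AE x in lebesgue. (\<lambda>j. indicator (E j) x :: real) \<longlonglongrightarrow> 0) \<longrightarrow>
       (\<lambda>j. BFS_norm \<rho> (\<lambda>x. f x * indicator (E (j::nat)) x)) \<longlonglongrightarrow> 0)"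

definition in_L2 :: "('a::euclidean_space \<Rightarrow> complex) \<Rightarrow> bool" where
  "in_L2 f \<longleftrightarrow> f \<in> borel_measurable lebesgue \<and> integrable lebesgue (\<lambda>x. (cmod (f x))\<^sup>2)"

definition L2_norm :: "('a::euclidean_space \<Rightarrow> complex) \<Rightarrow> real" where
  "L2_norm f = sqrt (\<integral> x. (cmod (f x))\<^sup>2 \<partial>lebesgue)"

text \<open>C^\<infinity>: partial derivatives of all orders exist and are continuous.\<close>
coinductive smooth_fn :: "('a::euclidean_space \<Rightarrow> complex) \<Rightarrow> bool" where
  "continuous_on UNIV f \<Longrightarrow>
   (\<forall>i\<in>Basis. \<exists>g. smooth_fn g \<and> (\<forall>x. ((\<lambda>t. f (x + t *\<^sub>R i)) has_vector_derivative g x) (at 0)))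
   \<Longrightarrow> smooth_fn f"

definition C0_inf :: "('a::euclidean_space \<Rightarrow> complex) \<Rightarrow> bool" where
  "C0_inf f \<longleftrightarrow> smooth_fn f \<and> compact (closure {x. f x \<noteq> 0})"

definition bounded_L2_approx :: "(('a::euclidean_space \<Rightarrow> ennreal) \<Rightarrow> ennreal) \<Rightarrow> bool" where
  "bounded_L2_approx \<rho> \<longleftrightarrow>
    (\<forall>u. in_L2 u \<and> in_BFS \<rho> u \<longrightarrow>
      (\<exists>U :: nat \<Rightarrow> 'a \<Rightarrow> complex. (\<forall>j. C0_inf (U j)) \<and>
         (\<lambda>j. L2_norm (\<lambda>x. u x - U j x)) \<longlonglongrightarrow> 0 \<and>
         limsup (\<lambda>j. BFS_norm \<rho> (U j)) \<le> BFS_norm \<rho> u))"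

end

theory Submission
  imports Defs "HOL-Computational_Algebra.Polynomial"
begin

text \<open>Truncating \<open>u\<close> to \<open>{|x| \<le> k, |u x| \<le> k}\<close> costs little in both norms: in \<open>X\<close> by absolute continuity
  of the norm, in \<open>L\<^sup>2\<close> by dominated convergence. The truncation \<open>f\<close> is bounded with bounded support and
  is an a.e. limit of continuous functions; clamped and cut off, these are uniformly approximated by
  \<open>C\<^sub>0\<^sup>\<infinity>\<close> functions of the form (bump) \<open>\<cdot>\<close> (polynomial) via Stone--Weierstrass. The resulting
  \<open>C\<^sub>0\<^sup>\<infinity>\<close> approximants of \<open>f\<close> converge a.e. and are dominated by a multiple of the indicator of a ball,
  so the errors tend to \<open>0\<close> in \<open>L\<^sup>2\<close> by dominated convergence and in \<open>X\<close> by absolute continuity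
  again. A diagonal choice gives \<open>u\<^sub>j \<rightarrow> u\<close> in both norms, and the triangle inequality in \<open>X\<close> gives
  \<open>limsup \<parallel>u\<^sub>j\<parallel>\<^sub>X \<le> \<parallel>u\<parallel>\<^sub>X\<close>.\<close>

coinductive smooth_real_fun :: "(real \<Rightarrow> real) \<Rightarrow> bool" where
  "smooth_real_fun g \<Longrightarrow> (\<forall>t. (f has_real_derivative g t) (at t)) \<Longrightarrow> smooth_real_fun f"

text \<open>All derivatives of \<open>exp (-1/t)\<close>, extended by \<open>0\<close> for \<open>t \<le> 0\<close>, have the form
  \<open>P(1/t) exp (-1/t)\<close>; differentiation acts on \<open>P\<close> as \<open>flat_fun_deriv_poly\<close>.\<close>

definition flat_fun :: "real poly \<Rightarrow> real \<Rightarrow> real" where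
  "flat_fun P t = (if t > 0 then poly P (inverse t) * exp (- inverse t) else 0)"

definition flat_fun_deriv_poly :: "real poly \<Rightarrow> real poly" where
  "flat_fun_deriv_poly P = [:0,0,1:] * (P - pderiv P)"

lemma tendsto_poly_times_exp_neg_at_top:
  fixes P :: "real poly"
  shows "((\<lambda>y. poly P y * exp (-y)) \<longlongrightarrow> 0) at_top"
proof -
  have eq: "poly P y * exp (-y::real) = (\<Sum>i\<le>degree P. coeff P i * (y ^ i / exp y))" for y
    by (simp add: poly_altdef sum_distrib_right exp_minus divide_inverse mult.assoc)
  have "((\<lambda>y. \<Sum>i\<le>degree P. coeff P i * (y ^ i / exp y)) \<longlongrightarrow> (\<Sum>i\<le>degree P. coeff P i * 0)) at_top"
    by (intro tendsto_sum tendsto_mult tendsto_const tendsto_power_div_exp_0)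
  then show ?thesis by (simp add: eq)
qed

lemma flat_fun_has_derivative_0: "(flat_fun P has_real_derivative 0) (at 0)"
proof -
  have "((\<lambda>y. (flat_fun P y - flat_fun P 0) / (y - 0)) \<longlongrightarrow> 0) (at 0)"
  proof (rule filterlim_split_at)
    show "((\<lambda>y. (flat_fun P y - flat_fun P 0) / (y - 0)) \<longlongrightarrow> 0) (at_left 0)"
    proof (rule Lim_transform_eventually[OF tendsto_const])
      show "\<forall>\<^sub>F y in at_left 0. 0 = (flat_fun P y - flat_fun P 0) / (y - 0)"
        by (rule eventually_at_leftI[of "-1"]) (auto simp: flat_fun_def)
    qed
    have "((\<lambda>y. poly ([:0,1:] * P) (inverse y) * exp (- inverse y)) \<longlongrightarrow> 0) (at_right 0)"
      by (rule filterlim_compose[OF tendsto_poly_times_exp_neg_at_top filterlim_inverse_at_top_right])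
    then show "((\<lambda>y. (flat_fun P y - flat_fun P 0) / (y - 0)) \<longlongrightarrow> 0) (at_right 0)"
    proof (rule Lim_transform_eventually)
      show "\<forall>\<^sub>F y in at_right 0.
          poly ([:0,1:] * P) (inverse y) * exp (- inverse y) = (flat_fun P y - flat_fun P 0) / (y - 0)"
        by (rule eventually_at_rightI[of _ "1"]) (auto simp: flat_fun_def field_simps)
    qed
  qed
  then show ?thesis by (simp add: has_field_derivative_iff)
qed

lemma flat_fun_has_derivative_pos:
  assumes "t > 0"
  shows "(flat_fun P has_real_derivative flat_fun (flat_fun_deriv_poly P) t) (at t)"
proof -
  have "((\<lambda>t. poly P (inverse t) * exp (- inverse t)) has_real_derivative
      (poly (pderiv P) (inverse t) * (- inverse (t^2)) * exp (- inverse t) +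
       poly P (inverse t) * (exp (- inverse t) * inverse (t^2)))) (at t)"
    using assms
    by (auto intro!: derivative_eq_intros DERIV_chain2[OF poly_DERIV] simp: power2_eq_square field_simps)
  moreover have "poly (pderiv P) (inverse t) * (- inverse (t^2)) * exp (- inverse t) +
       poly P (inverse t) * (exp (- inverse t) * inverse (t^2)) = flat_fun (flat_fun_deriv_poly P) t"
    using assms by (simp add: flat_fun_def flat_fun_deriv_poly_def algebra_simps power2_eq_square)
  ultimately have "((\<lambda>t. poly P (inverse t) * exp (- inverse t)) has_real_derivative
      flat_fun (flat_fun_deriv_poly P) t) (at t)"
    by simp
  then show ?thesis
    by (rule has_field_derivative_transform_within_open[of _ _ _ "{0<..}"])
      (use assms in \<open>auto simp: flat_fun_def\<close>)
qed

lemma flat_fun_has_derivative: "(flat_fun P has_real_derivative flat_fun (flat_fun_deriv_poly P) t) (at t)"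
proof -
  consider "t > 0" | "t < 0" | "t = 0" by linarith
  then show ?thesis
  proof cases
    case 2
    have "((\<lambda>t. 0) has_real_derivative flat_fun (flat_fun_deriv_poly P) t) (at t)"
      using 2 by (simp add: flat_fun_def)
    then show ?thesis
      by (rule has_field_derivative_transform_within_open[of _ _ _ "{..<0}"])
        (use 2 in \<open>auto simp: flat_fun_def\<close>)
  next
    case 3
    then show ?thesis using flat_fun_has_derivative_0[of P] by (simp add: flat_fun_def)
  qed (rule flat_fun_has_derivative_pos)
qed

lemma smooth_real_fun_flat_fun: "smooth_real_fun (flat_fun P)"
proof -
  have "\<exists>P. f = flat_fun P \<Longrightarrow> smooth_real_fun f" for f
  proof (coinduction arbitrary: f rule: smooth_real_fun.coinduct)
    case (smooth_real_fun f)
    then obtain P where "f = flat_fun P" by blast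
    then show ?case
      using flat_fun_has_derivative by (intro exI[of _ "flat_fun (flat_fun_deriv_poly P)"] exI[of _ f]) auto
  qed
  then show ?thesis by blast
qed

lemma smooth_real_fun_continuous: "smooth_real_fun \<phi> \<Longrightarrow> continuous_on UNIV \<phi>"
  by (erule smooth_real_fun.cases) (auto intro!: continuous_at_imp_continuous_on DERIV_isCont)

text \<open>Just enough operations to build bump functions; every member is \<open>C\<^sup>\<infinity>\<close> because the class is closed
  under directional derivatives.\<close>

inductive smooth_class :: "('a::euclidean_space \<Rightarrow> real) \<Rightarrow> bool" where
  const: "smooth_class (\<lambda>x. c)"
| linear: "bounded_linear l \<Longrightarrow> smooth_class l"
| inner_self: "smooth_class (\<lambda>x. inner x x)"
| add: "smooth_class f \<Longrightarrow> smooth_class g \<Longrightarrow> smooth_class (\<lambda>x. f x + g x)"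
| mult: "smooth_class f \<Longrightarrow> smooth_class g \<Longrightarrow> smooth_class (\<lambda>x. f x * g x)"
| compose: "smooth_real_fun \<phi> \<Longrightarrow> smooth_class f \<Longrightarrow> smooth_class (\<lambda>x. \<phi> (f x))"

lemma smooth_class_continuous: "smooth_class f \<Longrightarrow> continuous_on UNIV f"
proof (induction rule: smooth_class.induct)
  case (linear l) then show ?case by (simp add: linear_continuous_on)
next
  case (compose \<phi> f) then show ?case
    using smooth_real_fun_continuous continuous_on_compose2[of UNIV \<phi> UNIV f] by auto
qed (auto intro!: continuous_intros)

lemma smooth_class_real_polynomial_function: "real_polynomial_function f \<Longrightarrow> smooth_class f"
  by (induction rule: real_polynomial_function.induct) (auto intro: smooth_class.intros)

lemma has_real_derivative_linear_along_line:
  "bounded_linear l \<Longrightarrow> ((\<lambda>t. l (x + t *\<^sub>R i)) has_real_derivative l i) (at 0)"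
  by (auto simp: linear_simps intro!: derivative_eq_intros)

lemma has_real_derivative_inner_self_along_line:
  "((\<lambda>t. inner (x + t *\<^sub>R i) (x + t *\<^sub>R i)) has_real_derivative 2 * inner x i) (at 0)"
proof -
  have "(\<lambda>t. inner (x + t *\<^sub>R i) (x + t *\<^sub>R i)) = (\<lambda>t. inner x x + 2 * t * inner x i + t * t * inner i i)"
    by (simp add: inner_add_left inner_add_right algebra_simps inner_commute[of i x])
  then show ?thesis by (auto intro!: derivative_eq_intros)
qed

lemma smooth_class_directional_derivative:
  assumes "smooth_class f"
  shows "\<exists>g. smooth_class g \<and> (\<forall>x. ((\<lambda>t. f (x + t *\<^sub>R i)) has_real_derivative g x) (at 0))"
  using assms
proof (induction rule: smooth_class.induct)
  case (const c) then show ?case by (intro exI[of _ "\<lambda>x. 0"]) (auto intro: smooth_class.intros)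
next
  case (linear l)
  then show ?case
    by (intro exI[of _ "\<lambda>x. l i"]) (auto intro: smooth_class.const has_real_derivative_linear_along_line)
next
  case inner_self
  have "smooth_class (\<lambda>x. 2 * inner x i)"
    by (intro smooth_class.linear bounded_linear_const_mult bounded_linear_inner_left)
  then show ?case using has_real_derivative_inner_self_along_line by blast
next
  case (add f g)
  then obtain f' g' where "smooth_class f'" "smooth_class g'"
    "\<And>x. ((\<lambda>t. f (x + t *\<^sub>R i)) has_real_derivative f' x) (at 0)"
    "\<And>x. ((\<lambda>t. g (x + t *\<^sub>R i)) has_real_derivative g' x) (at 0)" by blast
  then show ?case
    by (intro exI[of _ "\<lambda>x. f' x + g' x"] conjI allI smooth_class.add DERIV_add) auto
next
  case (mult f g)
  then obtain f' g' where "smooth_class f'" "smooth_class g'"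
    and d: "\<And>x. ((\<lambda>t. f (x + t *\<^sub>R i)) has_real_derivative f' x) (at 0)"
    "\<And>x. ((\<lambda>t. g (x + t *\<^sub>R i)) has_real_derivative g' x) (at 0)" by blast
  have "((\<lambda>t. f (x + t *\<^sub>R i) * g (x + t *\<^sub>R i)) has_real_derivative f' x * g x + g' x * f x) (at 0)" for x
    using DERIV_mult[OF d(1)[of x] d(2)[of x]] by simp
  then show ?case using mult.hyps \<open>smooth_class f'\<close> \<open>smooth_class g'\<close>
    by (intro exI[of _ "\<lambda>x. f' x * g x + g' x * f x"] conjI smooth_class.add
        smooth_class.mult[of f' g] smooth_class.mult[of g' f]) auto
next
  case (compose \<phi> f)
  obtain \<phi>' where "smooth_real_fun \<phi>'" and d\<phi>: "\<And>t. (\<phi> has_real_derivative \<phi>' t) (at t)"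
    using compose.hyps(1) by (auto elim: smooth_real_fun.cases)
  obtain f' where "smooth_class f'" and d: "\<And>x. ((\<lambda>t. f (x + t *\<^sub>R i)) has_real_derivative f' x) (at 0)"
    using compose.IH by blast
  have "((\<lambda>t. \<phi> (f (x + t *\<^sub>R i))) has_real_derivative \<phi>' (f x) * f' x) (at 0)" for x
    using DERIV_chain2[OF d\<phi> d[of x]] by simp
  moreover have "smooth_class (\<lambda>x. \<phi>' (f x) * f' x)"
    by (rule smooth_class.mult[OF smooth_class.compose[OF \<open>smooth_real_fun \<phi>'\<close> compose.hyps(2)]
          \<open>smooth_class f'\<close>])
  ultimately show ?case by (intro exI[of _ "\<lambda>x. \<phi>' (f x) * f' x"] conjI) auto
qed

lemma smooth_fn_smooth_class:
  assumes "smooth_class f" "smooth_class g"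
  shows "smooth_fn (\<lambda>x. of_real (f x) + \<i> * of_real (g x))"
proof -
  have "\<exists>f g. F = (\<lambda>x. of_real (f x) + \<i> * of_real (g x)) \<and> smooth_class f \<and> smooth_class g
      \<Longrightarrow> smooth_fn F" for F :: "'a \<Rightarrow> complex"
  proof (coinduction arbitrary: F rule: smooth_fn.coinduct)
    case (smooth_fn F)
    then obtain f g where F: "F = (\<lambda>x. of_real (f x) + \<i> * of_real (g x))"
      and fg: "smooth_class f" "smooth_class g" by blast
    have cont: "continuous_on UNIV F"
      unfolding F using smooth_class_continuous[OF fg(1)] smooth_class_continuous[OF fg(2)]
      by (auto intro!: continuous_intros)
    have deriv: "\<exists>G. ((\<exists>H. G = H \<and> (\<exists>f g. H = (\<lambda>x. of_real (f x) + \<i> * of_real (g x))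
        \<and> smooth_class f \<and> smooth_class g)) \<or> smooth_fn G) \<and>
        (\<forall>x. ((\<lambda>t. F (x + t *\<^sub>R i)) has_vector_derivative G x) (at 0))" for i
    proof -
      obtain f' where f': "smooth_class f'" "\<And>x. ((\<lambda>t. f (x + t *\<^sub>R i)) has_real_derivative f' x) (at 0)"
        using smooth_class_directional_derivative[OF fg(1)] by blast
      obtain g' where g': "smooth_class g'" "\<And>x. ((\<lambda>t. g (x + t *\<^sub>R i)) has_real_derivative g' x) (at 0)"
        using smooth_class_directional_derivative[OF fg(2)] by blast
      have "((\<lambda>t. F (x + t *\<^sub>R i)) has_vector_derivative (of_real (f' x) + \<i> * of_real (g' x))) (at 0)" for x
        unfolding F
        by (intro has_vector_derivative_add has_vector_derivative_of_real f' g' has_vector_derivative_mult_right)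
      then show ?thesis using f'(1) g'(1)
        by (intro exI[of _ "\<lambda>x. of_real (f' x) + \<i> * of_real (g' x)"] conjI disjI1 refl exI[of _ f'] exI[of _ g'] allI)
    qed
    show ?case by (intro exI[of _ F] conjI refl ballI cont deriv)
  qed
  then show ?thesis using assms by blast
qed

lemma smooth_class_bump:
  assumes "R > 0"
  obtains \<psi> :: "'a::euclidean_space \<Rightarrow> real"
  where "smooth_class \<psi>" "\<And>x. 0 \<le> \<psi> x" "\<And>x. \<psi> x \<le> 1"
    "\<And>x. norm x < R \<Longrightarrow> \<psi> x > 0" "\<And>x. R \<le> norm x \<Longrightarrow> \<psi> x = 0"
proof
  define \<psi> where "\<psi> x = flat_fun 1 (R\<^sup>2 + (-1) * inner x x)" for x :: 'a
  have "smooth_class (\<lambda>x::'a. R\<^sup>2 + (-1) * inner x x)"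
    by (intro smooth_class.add smooth_class.mult smooth_class.const smooth_class.inner_self)
  then show "smooth_class \<psi>"
    unfolding \<psi>_def by (rule smooth_class.compose[OF smooth_real_fun_flat_fun])
  show "0 \<le> \<psi> x" "\<psi> x \<le> 1" for x
    by (auto simp: \<psi>_def flat_fun_def)
  show "\<psi> x > 0" if "norm x < R" for x
  proof -
    have "norm x ^ 2 < R ^ 2" using that by (intro power_strict_mono) auto
    then show ?thesis by (simp add: \<psi>_def flat_fun_def power2_norm_eq_inner)
  qed
  show "\<psi> x = 0" if "R \<le> norm x" for x
  proof -
    have "R ^ 2 \<le> norm x ^ 2" using that assms by (intro power_mono) auto
    then show ?thesis by (simp add: \<psi>_def flat_fun_def power2_norm_eq_inner)
  qed
qed

lemma smooth_fn_smooth_class_times_polynomial: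
  assumes "smooth_class \<psi>" "polynomial_function p"
  shows "smooth_fn (\<lambda>x. of_real (\<psi> x) * p x)"
proof -
  have "real_polynomial_function (\<lambda>x. Re (p x))" "real_polynomial_function (\<lambda>x. Im (p x))"
    using assms(2) bounded_linear_Re bounded_linear_Im unfolding polynomial_function_def o_def by blast+
  then have "smooth_fn (\<lambda>x. of_real (\<psi> x * Re (p x)) + \<i> * of_real (\<psi> x * Im (p x)))"
    by (intro smooth_fn_smooth_class smooth_class.mult[OF assms(1) smooth_class_real_polynomial_function])
  moreover have "of_real (\<psi> x * Re (p x)) + \<i> * of_real (\<psi> x * Im (p x)) = of_real (\<psi> x) * p x" for x
    by (subst (3) complex_eq) (simp add: algebra_simps)
  ultimately show ?thesis by simp
qed

lemma compact_support_if_vanishing_outside_ball: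
  fixes s :: "'a::euclidean_space \<Rightarrow> 'b::zero"
  assumes "\<And>x. R \<le> norm x \<Longrightarrow> s x = 0"
  shows "compact (closure {x. s x \<noteq> 0})"
proof -
  have "{x. s x \<noteq> 0} \<subseteq> cball 0 R"
    using assms by (force simp: not_le)
  then have "closure {x. s x \<noteq> 0} \<subseteq> cball 0 R"
    by (intro closure_minimal) auto
  then show ?thesis by (meson bounded_cball bounded_subset closed_closure compact_eq_bounded_closed)
qed

lemma continuous_on_divide_vanishing_outside_ball:
  fixes c :: "'a::euclidean_space \<Rightarrow> complex"
  assumes cont: "continuous_on UNIV c" "continuous_on UNIV \<psi>" and "r < R"
    and supp: "\<And>x. r \<le> norm x \<Longrightarrow> c x = 0" and pos: "\<And>x. norm x < R \<Longrightarrow> \<psi> x \<noteq> 0"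
  shows "continuous_on UNIV (\<lambda>x. c x / of_real (\<psi> x))"
proof -
  have "continuous_on (ball 0 R) (\<lambda>x. c x / of_real (\<psi> x))"
    using pos by (intro continuous_on_divide continuous_on_subset[OF cont(1)] continuous_on_of_real
        continuous_on_subset[OF cont(2)]) auto
  moreover have "continuous_on (- cball 0 r) (\<lambda>x. c x / of_real (\<psi> x))"
    by (rule continuous_on_cong[THEN iffD2, OF refl _ continuous_on_const[of _ 0]]) (auto simp: supp)
  ultimately have "continuous_on (ball 0 R \<union> - cball 0 r) (\<lambda>x. c x / of_real (\<psi> x))"
    by (rule continuous_on_open_Un[OF open_ball open_Compl[OF closed_cball]])
  moreover have "ball (0::'a) R \<union> - cball 0 r = UNIV" using \<open>r < R\<close> by auto
  ultimately show ?thesis by simp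
qed

text \<open>Divide \<open>c\<close> by a bump \<open>\<psi>\<close> that is positive on \<open>ball 0 R\<close>, approximate the quotient by a
  polynomial \<open>p\<close> (Stone--Weierstrass) and take \<open>\<psi> p\<close>.\<close>

lemma C0_inf_uniform_approx:
  fixes c :: "'a::euclidean_space \<Rightarrow> complex"
  assumes cont: "continuous_on UNIV c" and "0 < r" "r < R" and supp: "\<And>x. r \<le> norm x \<Longrightarrow> c x = 0"
    and "\<delta> > 0"
  shows "\<exists>s. C0_inf s \<and> (\<forall>x. cmod (s x - c x) \<le> \<delta>) \<and> (\<forall>x. R \<le> norm x \<longrightarrow> s x = 0)"
proof -
  obtain \<psi> :: "'a \<Rightarrow> real" where \<psi>: "smooth_class \<psi>" "\<And>x. 0 \<le> \<psi> x" "\<And>x. \<psi> x \<le> 1"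
    "\<And>x. norm x < R \<Longrightarrow> \<psi> x > 0" "\<And>x. R \<le> norm x \<Longrightarrow> \<psi> x = 0"
    using smooth_class_bump[of R] assms(2,3) by auto
  define q where "q x = c x / of_real (\<psi> x)" for x
  have "continuous_on UNIV q"
    unfolding q_def using \<psi>(4)
    by (intro continuous_on_divide_vanishing_outside_ball[OF cont smooth_class_continuous[OF \<psi>(1)] \<open>r < R\<close> supp])
      (auto simp: less_le)
  then obtain p where p: "polynomial_function p" and pq: "\<And>x. x \<in> cball 0 R \<Longrightarrow> norm (q x - p x) < \<delta>"
    using Stone_Weierstrass_polynomial_function[OF compact_cball[of 0 R] _ \<open>\<delta> > 0\<close>]
    by (metis continuous_on_subset subset_UNIV)
  define s where "s x = of_real (\<psi> x) * p x" for x
  have s0: "s x = 0" if "R \<le> norm x" for x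
    using \<psi>(5)[OF that] by (simp add: s_def)
  have "cmod (s x - c x) \<le> \<delta>" for x
  proof (cases "norm x < R")
    case True
    have "s x - c x = of_real (\<psi> x) * (p x - q x)"
      using \<psi>(4)[OF True] by (simp add: s_def q_def algebra_simps)
    then have "cmod (s x - c x) = \<psi> x * cmod (q x - p x)"
      using \<psi>(2)[of x] by (simp add: norm_mult norm_minus_commute)
    also have "\<dots> \<le> 1 * \<delta>"
      using \<psi>(2,3)[of x] pq[of x] True by (intro mult_mono) auto
    finally show ?thesis by simp
  next
    case False
    then show ?thesis using s0[of x] supp[of x] assms(3,5) by auto
  qed
  moreover have "C0_inf s"
    using smooth_fn_smooth_class_times_polynomial[OF \<psi>(1) p] compact_support_if_vanishing_outside_ball[OF s0]
    unfolding C0_inf_def s_def by simp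
  ultimately show ?thesis using s0 by blast
qed

definition clamp_complex :: "real \<Rightarrow> complex \<Rightarrow> complex" where
  "clamp_complex k z = Complex (max (-k) (min k (Re z))) (max (-k) (min k (Im z)))"

lemma continuous_on_clamp_complex: "continuous_on UNIV (clamp_complex k)"
  unfolding clamp_complex_def Complex_eq by (intro continuous_intros)

lemma clamp_complex_eq_self: "cmod z \<le> k \<Longrightarrow> clamp_complex k z = z"
  using abs_Re_le_cmod[of z] abs_Im_le_cmod[of z] by (auto simp: clamp_complex_def intro: complex_eqI)

lemma norm_clamp_complex_le:
  assumes "0 \<le> k"
  shows "cmod (clamp_complex k z) \<le> 2 * k"
proof -
  have "\<bar>max (-k) (min k t)\<bar> \<le> k" for t using assms by auto
  then show ?thesis
    using cmod_le[of "clamp_complex k z"] by (smt (verit) clamp_complex_def complex.sel)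
qed

text \<open>A measurable \<open>f\<close> is an a.e. limit of continuous functions; clamping them to the range of \<open>f\<close> and
  multiplying by a cutoff keeps them bounded with bounded support.\<close>

lemma continuous_ae_approx_bounded:
  fixes f :: "'a::euclidean_space \<Rightarrow> complex"
  assumes "f \<in> borel_measurable lebesgue" and "k > 0"
    and bound: "\<And>x. cmod (f x) \<le> k" and supp: "\<And>x. k < norm x \<Longrightarrow> f x = 0"
  obtains c where "\<And>n. continuous_on UNIV (c n)" "\<And>n x. cmod (c n x) \<le> 2 * k"
    "\<And>n x. k + 1 \<le> norm x \<Longrightarrow> c n x = 0" "AE x in lebesgue. (\<lambda>n. c n x) \<longlonglongrightarrow> f x"
proof -
  have "f measurable_on UNIV"
    using assms(1) by (intro lebesgue_measurable_imp_measurable_on) auto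
  then obtain N g where N: "negligible N" and g_cont: "\<And>n. continuous_on UNIV (g n)"
    and g_lim: "\<And>x. x \<notin> N \<Longrightarrow> (\<lambda>n. g n x) \<longlonglongrightarrow> f x"
    unfolding measurable_on_def by auto
  define \<eta> where "\<eta> x = max 0 (min 1 (k + 1 - norm x))" for x :: 'a
  have \<eta>: "0 \<le> \<eta> x" "\<eta> x \<le> 1" for x unfolding \<eta>_def by auto
  define c where "c n x = complex_of_real (\<eta> x) * clamp_complex k (g n x)" for n x
  show ?thesis
  proof
    show "continuous_on UNIV (c n)" for n
      unfolding c_def \<eta>_def
      by (intro continuous_intros continuous_on_compose2[OF continuous_on_clamp_complex g_cont]) auto
    show "cmod (c n x) \<le> 2 * k" for n x
    proof -
      have "\<eta> x * cmod (clamp_complex k (g n x)) \<le> 1 * (2 * k)"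
        using \<eta>[of x] norm_clamp_complex_le[of k "g n x"] \<open>k > 0\<close> by (intro mult_mono) auto
      then show ?thesis using \<eta>(1)[of x] by (simp add: c_def norm_mult)
    qed
    show "c n x = 0" if "k + 1 \<le> norm x" for n x
      using that unfolding c_def \<eta>_def by auto
    have "AE x in lebesgue. x \<notin> N"
      using N by (intro AE_not_in) (simp add: negligible_iff_null_sets)
    then show "AE x in lebesgue. (\<lambda>n. c n x) \<longlonglongrightarrow> f x"
    proof eventually_elim
      case (elim x)
      have "(\<lambda>n. clamp_complex k (g n x)) \<longlonglongrightarrow> clamp_complex k (f x)"
        using continuous_on_tendsto_compose[OF continuous_on_clamp_complex g_lim[OF elim]] by simp
      then have "(\<lambda>n. clamp_complex k (g n x)) \<longlonglongrightarrow> f x"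
        by (simp add: clamp_complex_eq_self[OF bound])
      moreover have "complex_of_real (\<eta> x) * f x = f x"
        using supp[of x] by (cases "norm x \<le> k") (auto simp: \<eta>_def)
      ultimately show ?case
        unfolding c_def by (metis tendsto_mult[OF tendsto_const])
    qed
  qed
qed

lemma C0_inf_ae_approx_bounded:
  fixes f :: "'a::euclidean_space \<Rightarrow> complex"
  assumes "f \<in> borel_measurable lebesgue" and "k > 0"
    and bound: "\<And>x. cmod (f x) \<le> k" and supp: "\<And>x. k < norm x \<Longrightarrow> f x = 0"
  obtains s where "\<And>n. C0_inf (s n)"
    "\<And>n x. cmod (s n x - f x) \<le> (3 * k + 1) * indicator (cball 0 (k + 2)) x"
    "AE x in lebesgue. (\<lambda>n. s n x) \<longlonglongrightarrow> f x"
proof -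
  obtain c where c_cont: "\<And>n. continuous_on UNIV (c n)" and c_bound: "\<And>n x. cmod (c n x) \<le> 2 * k"
    and c_supp: "\<And>n x. k + 1 \<le> norm x \<Longrightarrow> c n x = 0"
    and c_lim: "AE x in lebesgue. (\<lambda>n. c n x) \<longlonglongrightarrow> f x"
    using continuous_ae_approx_bounded[OF assms] by blast
  have "\<exists>s. C0_inf s \<and> (\<forall>x. cmod (s x - c n x) \<le> inverse (real (Suc n))) \<and>
      (\<forall>x. k + 2 \<le> norm x \<longrightarrow> s x = 0)" for n
    by (rule C0_inf_uniform_approx[OF c_cont[of n], where r = "k + 1"]) (use \<open>k > 0\<close> c_supp in auto)
  then obtain s where s_C0: "\<And>n. C0_inf (s n)"
    and s_close: "\<And>n x. cmod (s n x - c n x) \<le> inverse (real (Suc n))"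
    and s_supp: "\<And>n x. k + 2 \<le> norm x \<Longrightarrow> s n x = 0"
    by metis
  show ?thesis
  proof
    show "C0_inf (s n)" for n by (rule s_C0)
    show "cmod (s n x - f x) \<le> (3 * k + 1) * indicator (cball 0 (k + 2)) x" for n x
    proof (cases "k + 2 \<le> norm x")
      case True
      then show ?thesis using s_supp[of x n] supp[of x] \<open>k > 0\<close> by (simp add: indicator_def)
    next
      case False
      have "cmod (s n x - f x) \<le> cmod (s n x - c n x) + cmod (c n x) + cmod (f x)"
        using norm_triangle_ineq4[of "s n x - c n x + c n x" "f x"] norm_triangle_ineq[of "s n x - c n x" "c n x"]
        by simp
      also have "\<dots> \<le> 1 + 2 * k + k"
        using s_close[of n x] c_bound[of n x] bound[of x] inverse_le_1_iff[of "real (Suc n)"] by simp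
      finally show ?thesis using False by (simp add: indicator_def)
    qed
    show "AE x in lebesgue. (\<lambda>n. s n x) \<longlonglongrightarrow> f x"
      using c_lim
    proof eventually_elim
      case (elim x)
      have "(\<lambda>n. s n x - c n x) \<longlonglongrightarrow> 0"
        by (rule tendsto_norm_zero_cancel, rule tendsto_sandwich[OF _ _ tendsto_const LIMSEQ_inverse_real_of_nat])
          (use s_close in auto)
      then show ?case using tendsto_add[OF _ elim] by fastforce
    qed
  qed
qed

lemma C0_inf_borel_measurable: "C0_inf f \<Longrightarrow> f \<in> borel_measurable lebesgue"
  using continuous_imp_measurable_on_sets_lebesgue[of UNIV f]
  by (auto simp: C0_inf_def elim: smooth_fn.cases)

lemma integrable_square_bound:
  fixes h :: "'a::euclidean_space \<Rightarrow> complex"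
  assumes "h \<in> borel_measurable lebesgue" "integrable lebesgue w" "\<And>x. (cmod (h x))\<^sup>2 \<le> w x"
  shows "integrable lebesgue (\<lambda>x. (cmod (h x))\<^sup>2)"
  by (rule Bochner_Integration.integrable_bound[OF assms(2)])
    (use assms in \<open>auto intro: order_trans[OF _ abs_ge_self]\<close>)

lemma integral_square_diff_le:
  fixes u f s :: "'a::euclidean_space \<Rightarrow> complex"
  assumes "u \<in> borel_measurable lebesgue" "s \<in> borel_measurable lebesgue"
    and uf: "integrable lebesgue (\<lambda>x. (cmod (u x - f x))\<^sup>2)"
    and fs: "integrable lebesgue (\<lambda>x. (cmod (f x - s x))\<^sup>2)"
  shows "integrable lebesgue (\<lambda>x. (cmod (u x - s x))\<^sup>2)"
    and "(\<integral>x. (cmod (u x - s x))\<^sup>2 \<partial>lebesgue) \<le>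
          2 * (\<integral>x. (cmod (u x - f x))\<^sup>2 \<partial>lebesgue) + 2 * (\<integral>x. (cmod (f x - s x))\<^sup>2 \<partial>lebesgue)"
proof -
  have pointwise: "(cmod (u x - s x))\<^sup>2 \<le> 2 * (cmod (u x - f x))\<^sup>2 + 2 * (cmod (f x - s x))\<^sup>2" for x
  proof -
    have "cmod (u x - s x) \<le> cmod (u x - f x) + cmod (f x - s x)"
      using norm_triangle_ineq[of "u x - f x" "f x - s x"] by simp
    then have "(cmod (u x - s x))\<^sup>2 \<le> (cmod (u x - f x) + cmod (f x - s x))\<^sup>2"
      by (intro power_mono) auto
    also have "\<dots> \<le> 2 * (cmod (u x - f x))\<^sup>2 + 2 * (cmod (f x - s x))\<^sup>2"
      using sum_squares_ge_zero[of "cmod (u x - f x) - cmod (f x - s x)" 0]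
      by (simp add: power2_eq_square algebra_simps)
    finally show ?thesis .
  qed
  have bound: "integrable lebesgue (\<lambda>x. 2 * (cmod (u x - f x))\<^sup>2 + 2 * (cmod (f x - s x))\<^sup>2)"
    using uf fs by simp
  show us: "integrable lebesgue (\<lambda>x. (cmod (u x - s x))\<^sup>2)"
    by (rule integrable_square_bound[OF _ bound pointwise]) (use assms(1,2) in measurable)
  have "(\<integral>x. (cmod (u x - s x))\<^sup>2 \<partial>lebesgue)
      \<le> (\<integral>x. 2 * (cmod (u x - f x))\<^sup>2 + 2 * (cmod (f x - s x))\<^sup>2 \<partial>lebesgue)"
    using us bound pointwise by (intro integral_mono) auto
  then show "(\<integral>x. (cmod (u x - s x))\<^sup>2 \<partial>lebesgue) \<le>
      2 * (\<integral>x. (cmod (u x - f x))\<^sup>2 \<partial>lebesgue) + 2 * (\<integral>x. (cmod (f x - s x))\<^sup>2 \<partial>lebesgue)"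
    using uf fs by simp
qed

lemma integral_square_dominated_tendsto_0:
  fixes h :: "nat \<Rightarrow> 'a::euclidean_space \<Rightarrow> complex"
  assumes "\<And>n. h n \<in> borel_measurable lebesgue"
    and "K \<in> sets lebesgue" "emeasure lebesgue K < \<infinity>"
    and bound: "\<And>n x. cmod (h n x) \<le> B * indicator K x"
    and lim: "AE x in lebesgue. (\<lambda>n. h n x) \<longlonglongrightarrow> 0"
  shows "(\<lambda>n. \<integral>x. (cmod (h n x))\<^sup>2 \<partial>lebesgue) \<longlonglongrightarrow> 0"
proof -
  have "(\<lambda>n. \<integral>x. (cmod (h n x))\<^sup>2 \<partial>lebesgue) \<longlonglongrightarrow> (\<integral>x. 0 \<partial>(lebesgue::'a measure))"
  proof (rule integral_dominated_convergence[where w = "\<lambda>x. B\<^sup>2 * indicator K x"])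
    show "integrable lebesgue (\<lambda>x. B\<^sup>2 * indicator K x)"
      using assms(2,3) by (intro integrable_mult_right integrable_real_indicator)
    show "AE x in lebesgue. (\<lambda>n. (cmod (h n x))\<^sup>2) \<longlonglongrightarrow> 0"
      using lim by eventually_elim (use tendsto_power[OF tendsto_norm, of _ 0 _ 2] in simp)
    show "AE x in lebesgue. norm ((cmod (h n x))\<^sup>2) \<le> B\<^sup>2 * indicator K x" for n
    proof (rule AE_I2)
      fix x
      have "(cmod (h n x))\<^sup>2 \<le> (B * indicator K x)\<^sup>2"
        using bound[of n x] by (intro power_mono) auto
      then show "norm ((cmod (h n x))\<^sup>2) \<le> B\<^sup>2 * indicator K x"
        by (auto simp: indicator_def power_mult_distrib)
    qed
  qed (use assms(1) in measurable)
  then show ?thesis by simp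
qed

definition L2_BFS_close ::
    "(('a::euclidean_space \<Rightarrow> ennreal) \<Rightarrow> ennreal) \<Rightarrow> real \<Rightarrow> ('a \<Rightarrow> complex) \<Rightarrow> ('a \<Rightarrow> complex) \<Rightarrow> bool" where
  "L2_BFS_close \<rho> e u v \<longleftrightarrow>
     integrable lebesgue (\<lambda>x. (cmod (u x - v x))\<^sup>2) \<and>
     (\<integral>x. (cmod (u x - v x))\<^sup>2 \<partial>lebesgue) < e \<and> BFS_norm \<rho> (\<lambda>x. u x - v x) < ennreal e"

lemma sets_lebesgue_large_values:
  fixes h :: "'a::euclidean_space \<Rightarrow> complex"
  assumes "h \<in> borel_measurable lebesgue"
  shows "{x. \<delta> < cmod (h x)} \<in> sets lebesgue"
proof -
  have "Measurable.pred lebesgue (\<lambda>x. \<delta> < cmod (h x))"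
    using assms by measurable
  then show ?thesis by (simp add: pred_def)
qed

lemma indicator_large_values_tendsto_0:
  fixes h :: "nat \<Rightarrow> 'a \<Rightarrow> 'b::real_normed_vector"
  assumes "(\<lambda>n. h n x) \<longlonglongrightarrow> 0" "\<delta> > 0"
  shows "(\<lambda>n. indicator {x. \<delta> < norm (h n x)} x :: real) \<longlonglongrightarrow> 0"
proof (rule tendsto_eventually)
  have "eventually (\<lambda>n. norm (h n x) < \<delta>) sequentially"
    using assms order_tendstoD(2)[OF tendsto_norm_zero] by blast
  then show "eventually (\<lambda>n. indicator {x. \<delta> < norm (h n x)} x = (0::real)) sequentially"
    by eventually_elim auto
qed

context
  fixes \<rho> :: "('a::euclidean_space \<Rightarrow> ennreal) \<Rightarrow> ennreal"
  assumes bfn: "banach_function_norm \<rho>"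
begin

lemma banach_function_norm_mono:
  "f \<in> borel_measurable lebesgue \<Longrightarrow> g \<in> borel_measurable lebesgue \<Longrightarrow> (\<And>x. g x \<le> f x) \<Longrightarrow> \<rho> g \<le> \<rho> f"
  using bfn unfolding banach_function_norm_def by (auto intro: AE_I2)

lemma banach_function_norm_add:
  "f \<in> borel_measurable lebesgue \<Longrightarrow> g \<in> borel_measurable lebesgue \<Longrightarrow> \<rho> (\<lambda>x. f x + g x) \<le> \<rho> f + \<rho> g"
  using bfn unfolding banach_function_norm_def by auto

lemma banach_function_norm_scale:
  "f \<in> borel_measurable lebesgue \<Longrightarrow> a \<ge> 0 \<Longrightarrow> \<rho> (\<lambda>x. ennreal a * f x) = ennreal a * \<rho> f"
  using bfn unfolding banach_function_norm_def by auto

lemma banach_function_norm_indicator_finite: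
  "K \<in> sets lebesgue \<Longrightarrow> emeasure lebesgue K < \<infinity> \<Longrightarrow> \<rho> (indicator K) < \<infinity>"
  using bfn unfolding banach_function_norm_def by auto

lemma BFS_norm_triangle:
  assumes "f \<in> borel_measurable lebesgue" "g \<in> borel_measurable lebesgue"
  shows "BFS_norm \<rho> (\<lambda>x. f x + g x) \<le> BFS_norm \<rho> f + BFS_norm \<rho> g"
proof -
  have "BFS_norm \<rho> (\<lambda>x. f x + g x) \<le> \<rho> (\<lambda>x. ennreal (cmod (f x)) + ennreal (cmod (g x)))"
    unfolding BFS_norm_def
    by (rule banach_function_norm_mono)
      (use assms in \<open>auto simp flip: ennreal_plus intro: ennreal_leI norm_triangle_ineq\<close>)
  also have "\<dots> \<le> BFS_norm \<rho> f + BFS_norm \<rho> g"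
    unfolding BFS_norm_def by (rule banach_function_norm_add) (use assms in measurable)
  finally show ?thesis .
qed

lemma BFS_norm_le_large_values:
  fixes h :: "'a \<Rightarrow> complex"
  assumes "h \<in> borel_measurable lebesgue" "K \<in> sets lebesgue" "B \<ge> 0" "\<delta> \<ge> 0"
    and bound: "\<And>x. cmod (h x) \<le> B * indicator K x"
  shows "BFS_norm \<rho> h \<le>
    BFS_norm \<rho> (\<lambda>x. of_real (B * indicator K x) * indicator {x. \<delta> < cmod (h x)} x) + ennreal \<delta> * \<rho> (indicator K)"
proof -
  let ?G = "\<lambda>x. of_real (B * indicator K x) * indicator {x. \<delta> < cmod (h x)} x :: complex"
  have pointwise: "ennreal (cmod (h x)) \<le> ennreal (cmod (?G x)) + ennreal \<delta> * indicator K x" for x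
  proof (cases "\<delta> < cmod (h x)")
    case True
    then have "ennreal (cmod (h x)) \<le> ennreal (cmod (?G x))"
      using bound[of x] assms(3) by (intro ennreal_leI) (auto simp: indicator_def)
    then show ?thesis by (rule order_trans) simp
  next
    case False
    then have "cmod (h x) \<le> \<delta> * indicator K x"
      using bound[of x] by (auto simp: indicator_def)
    then have "ennreal (cmod (h x)) \<le> ennreal \<delta> * indicator K x"
      using assms(4) by (auto simp: indicator_def)
    then show ?thesis by (rule order_trans) simp
  qed
  have "BFS_norm \<rho> h \<le> \<rho> (\<lambda>x. ennreal (cmod (?G x)) + ennreal \<delta> * indicator K x)"
    unfolding BFS_norm_def
    by (rule banach_function_norm_mono[OF _ _ pointwise]) (use assms sets_lebesgue_large_values[OF assms(1)] in measurable)
  also have "\<dots> \<le> BFS_norm \<rho> ?G + ennreal \<delta> * \<rho> (indicator K)"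
    unfolding BFS_norm_def
    using banach_function_norm_add[of "\<lambda>x. ennreal (cmod (?G x))" "\<lambda>x. ennreal \<delta> * indicator K x"]
      banach_function_norm_scale[of "indicator K" \<delta>] sets_lebesgue_large_values[OF assms(1)] assms
    by (simp add: measurable_compose)
  finally show ?thesis .
qed

lemma in_BFS_indicator:
  assumes "K \<in> sets lebesgue" "emeasure lebesgue K < \<infinity>" "B \<ge> 0"
  shows "in_BFS \<rho> (\<lambda>x. complex_of_real (B * indicator K x))"
proof -
  have "(\<lambda>x. ennreal (cmod (complex_of_real (B * indicator K x)))) = (\<lambda>x. ennreal B * indicator K x)"
    using \<open>B \<ge> 0\<close> by (auto simp: indicator_def)
  then show ?thesis
    unfolding in_BFS_def
    using banach_function_norm_scale[of "indicator K" B] banach_function_norm_indicator_finite assms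
    by (auto simp: ennreal_mult_less_top)
qed

text \<open>Where \<open>|h\<^sub>n| > \<delta>\<close>, \<open>h\<^sub>n\<close> is dominated by the fixed element \<open>B \<chi>\<^sub>K\<close> of \<open>X\<close>, whose norm on these
  shrinking sets vanishes by absolute continuity; elsewhere it is dominated by \<open>\<delta> \<chi>\<^sub>K\<close>.\<close>

lemma BFS_norm_dominated_tendsto_0:
  fixes h :: "nat \<Rightarrow> 'a \<Rightarrow> complex"
  assumes ac: "abs_cont_norm \<rho>" and hm: "\<And>n. h n \<in> borel_measurable lebesgue"
    and K: "K \<in> sets lebesgue" "emeasure lebesgue K < \<infinity>" and "B \<ge> 0"
    and bound: "\<And>n x. cmod (h n x) \<le> B * indicator K x"
    and lim: "AE x in lebesgue. (\<lambda>n. h n x) \<longlonglongrightarrow> 0"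
  shows "(\<lambda>n. BFS_norm \<rho> (h n)) \<longlonglongrightarrow> 0"
proof (rule tendsto_zero_ennreal)
  fix e :: real assume "e > 0"
  define G where "G x = complex_of_real (B * indicator K x)" for x
  have "in_BFS \<rho> G"
    unfolding G_def using K \<open>B \<ge> 0\<close> by (rule in_BFS_indicator)
  obtain c where c: "\<rho> (indicator K) = ennreal c" "c \<ge> 0"
    using banach_function_norm_indicator_finite[OF K] by (cases "\<rho> (indicator K)") auto
  define \<delta> where "\<delta> = e / (4 * (c + 1))"
  have "\<delta> > 0" "\<delta> * c \<le> e / 4"
    using \<open>e > 0\<close> c by (auto simp: \<delta>_def field_simps)
  define E where "E n = {x. \<delta> < cmod (h n x)}" for n
  have E_sets: "E n \<in> sets lebesgue" for n
    unfolding E_def by (rule sets_lebesgue_large_values[OF hm])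
  have "AE x in lebesgue. (\<lambda>n. indicator (E n) x :: real) \<longlonglongrightarrow> 0"
    using lim
  proof eventually_elim
    case (elim x)
    show ?case unfolding E_def by (rule indicator_large_values_tendsto_0[where h = h, OF elim \<open>\<delta> > 0\<close>])
  qed
  then have "(\<lambda>n. BFS_norm \<rho> (\<lambda>x. G x * indicator (E n) x)) \<longlonglongrightarrow> 0"
    using ac \<open>in_BFS \<rho> G\<close> E_sets unfolding abs_cont_norm_def by blast
  then have "eventually (\<lambda>n. BFS_norm \<rho> (\<lambda>x. G x * indicator (E n) x) < ennreal (e / 2)) sequentially"
    using \<open>e > 0\<close> by (intro order_tendstoD(2)) auto
  then show "eventually (\<lambda>n. BFS_norm \<rho> (h n) < ennreal e) sequentially"
  proof eventually_elim
    case (elim n)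
    have "BFS_norm \<rho> (h n) \<le> BFS_norm \<rho> (\<lambda>x. G x * indicator (E n) x) + ennreal \<delta> * ennreal c"
      using BFS_norm_le_large_values[OF hm K(1) \<open>B \<ge> 0\<close> _ bound, of \<delta>] \<open>\<delta> > 0\<close> c
      by (simp add: G_def E_def)
    also have "\<dots> \<le> ennreal (e / 2) + ennreal (e / 4)"
      using elim \<open>\<delta> > 0\<close> c \<open>\<delta> * c \<le> e / 4\<close> by (intro add_mono) (auto simp flip: ennreal_mult intro: ennreal_leI)
    also have "\<dots> < ennreal e"
      using \<open>e > 0\<close> by (simp flip: ennreal_plus add: ennreal_lessI)
    finally show ?case .
  qed
qed

lemma L2_BFS_close_trans:
  assumes "u \<in> borel_measurable lebesgue" "f \<in> borel_measurable lebesgue" "g \<in> borel_measurable lebesgue"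
    and uf: "L2_BFS_close \<rho> (e / 4) u f" and fg: "L2_BFS_close \<rho> (e / 4) f g"
  shows "L2_BFS_close \<rho> e u g"
proof -
  have "ennreal 0 < ennreal (e / 4)"
    using uf unfolding L2_BFS_close_def by (metis ennreal_0 not_gr_zero not_less_zero)
  then have "e > 0" by (simp add: ennreal_less_iff)
  note L2 = integral_square_diff_le[OF assms(1,3), of f]
  have "(\<integral>x. (cmod (u x - g x))\<^sup>2 \<partial>lebesgue) < e"
    using L2(2) uf fg unfolding L2_BFS_close_def by linarith
  moreover have "BFS_norm \<rho> (\<lambda>x. u x - g x) < ennreal e"
  proof -
    have "BFS_norm \<rho> (\<lambda>x. u x - g x) \<le> BFS_norm \<rho> (\<lambda>x. u x - f x) + BFS_norm \<rho> (\<lambda>x. f x - g x)"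
      using BFS_norm_triangle[of "\<lambda>x. u x - f x" "\<lambda>x. f x - g x"] assms(1-3) by simp
    also have "\<dots> \<le> ennreal (e / 4) + ennreal (e / 4)"
      using uf fg unfolding L2_BFS_close_def by (intro add_mono) auto
    also have "\<dots> < ennreal e"
      using \<open>e > 0\<close> by (simp flip: ennreal_plus add: ennreal_lessI)
    finally show ?thesis .
  qed
  ultimately show ?thesis
    using L2(1) uf fg unfolding L2_BFS_close_def by blast
qed

lemma limsup_BFS_norm_le:
  assumes "u \<in> borel_measurable lebesgue" "\<And>j. U j \<in> borel_measurable lebesgue"
    and lim: "(\<lambda>j. BFS_norm \<rho> (\<lambda>x. u x - U j x)) \<longlonglongrightarrow> 0"
  shows "limsup (\<lambda>j. BFS_norm \<rho> (U j)) \<le> BFS_norm \<rho> u"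
proof -
  have "BFS_norm \<rho> (U j) \<le> BFS_norm \<rho> u + BFS_norm \<rho> (\<lambda>x. u x - U j x)" for j
    using BFS_norm_triangle[of u "\<lambda>x. U j x - u x"] assms(1,2)
    by (simp add: BFS_norm_def norm_minus_commute)
  then have "limsup (\<lambda>j. BFS_norm \<rho> (U j)) \<le> limsup (\<lambda>j. BFS_norm \<rho> u + BFS_norm \<rho> (\<lambda>x. u x - U j x))"
    by (intro Limsup_mono always_eventually) auto
  also have "\<dots> = BFS_norm \<rho> u"
    using lim_imp_Limsup[OF trivial_limit_sequentially tendsto_add[OF tendsto_const lim]] by simp
  finally show ?thesis .
qed

lemma C0_inf_close_bounded:
  fixes f :: "'a \<Rightarrow> complex"
  assumes ac: "abs_cont_norm \<rho>" and f_meas: "f \<in> borel_measurable lebesgue" and "k > 0"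
    and "\<And>x. cmod (f x) \<le> k" "\<And>x. k < norm x \<Longrightarrow> f x = 0" and "e > 0"
  shows "\<exists>g. C0_inf g \<and> L2_BFS_close \<rho> e f g"
proof -
  obtain s where s_C0: "\<And>n. C0_inf (s n)"
    and s_bound: "\<And>n x. cmod (s n x - f x) \<le> (3 * k + 1) * indicator (cball 0 (k + 2)) x"
    and s_lim: "AE x in lebesgue. (\<lambda>n. s n x) \<longlonglongrightarrow> f x"
    using C0_inf_ae_approx_bounded[OF f_meas assms(3-5)] by blast
  define h where "h n x = f x - s n x" for n x
  define K :: "'a set" where "K = cball 0 (k + 2)"
  have h_meas: "h n \<in> borel_measurable lebesgue" for n
    unfolding h_def using f_meas C0_inf_borel_measurable[OF s_C0] by measurable
  have K: "K \<in> sets lebesgue" "emeasure lebesgue K < \<infinity>"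
    using emeasure_lborel_cball_finite[of "0::'a" "k + 2"] by (auto simp: K_def)
  have "3 * k + 1 \<ge> 0" using \<open>k > 0\<close> by simp
  have h_bound: "cmod (h n x) \<le> (3 * k + 1) * indicator K x" for n x
    using s_bound[of n x] by (simp add: h_def K_def norm_minus_commute)
  have h_lim: "AE x in lebesgue. (\<lambda>n. h n x) \<longlonglongrightarrow> 0"
    using s_lim
  proof eventually_elim
    case (elim x)
    show ?case unfolding h_def using tendsto_diff[OF tendsto_const elim, of "f x"] by simp
  qed
  have "eventually (\<lambda>n. (\<integral>x. (cmod (h n x))\<^sup>2 \<partial>lebesgue) < e \<and> BFS_norm \<rho> (h n) < ennreal e)
      sequentially"
    using \<open>e > 0\<close>
    by (intro eventually_conj order_tendstoD[OF integral_square_dominated_tendsto_0[OF h_meas K h_bound h_lim]]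
        order_tendstoD[OF BFS_norm_dominated_tendsto_0[OF ac h_meas K \<open>3 * k + 1 \<ge> 0\<close> h_bound h_lim]]) auto
  then obtain n where n: "(\<integral>x. (cmod (h n x))\<^sup>2 \<partial>lebesgue) < e" "BFS_norm \<rho> (h n) < ennreal e"
    unfolding eventually_sequentially by blast
  have "integrable lebesgue (\<lambda>x. (cmod (h n x))\<^sup>2)"
  proof (rule integrable_square_bound[OF h_meas])
    show "integrable lebesgue (\<lambda>x. (3 * k + 1)\<^sup>2 * indicator K x)"
      using K by (intro integrable_mult_right integrable_real_indicator)
    show "(cmod (h n x))\<^sup>2 \<le> (3 * k + 1)\<^sup>2 * indicator K x" for x
      using power_mono[OF h_bound[of n x], of 2] by (auto simp: indicator_def)
  qed
  with n have "L2_BFS_close \<rho> e f (s n)"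
    unfolding L2_BFS_close_def h_def by simp
  with s_C0 show ?thesis by blast
qed

end

definition truncation_set :: "('a::euclidean_space \<Rightarrow> complex) \<Rightarrow> nat \<Rightarrow> 'a set" where
  "truncation_set u k = {x. real k < norm x \<or> real k < cmod (u x)}"

lemma truncation_set_sets:
  assumes "u \<in> borel_measurable lebesgue"
  shows "truncation_set u k \<in> sets lebesgue"
proof -
  have [measurable]: "(\<lambda>x::'a. x) \<in> borel_measurable lebesgue"
    using id_borel_measurable_lebesgue by (simp add: id_def)
  have "Measurable.pred lebesgue (\<lambda>x. real k < norm x \<or> real k < cmod (u x))"
    using assms by measurable
  then show ?thesis by (simp add: truncation_set_def pred_def)
qed

lemma eventually_notin_truncation_set: "eventually (\<lambda>k. x \<notin> truncation_set u k) sequentially"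
proof -
  obtain n :: nat where "max (norm x) (cmod (u x)) \<le> real n" using real_arch_simple by blast
  then show ?thesis unfolding eventually_sequentially by (intro exI[of _ n]) (auto simp: truncation_set_def)
qed

lemma truncation_error_tendsto_0:
  fixes u :: "'a::euclidean_space \<Rightarrow> complex"
  assumes ac: "abs_cont_norm \<rho>" and uL: "in_L2 u" and uX: "in_BFS \<rho> u"
  shows "(\<lambda>k. BFS_norm \<rho> (\<lambda>x. u x * indicator (truncation_set u k) x)) \<longlonglongrightarrow> 0"
    and "(\<lambda>k. \<integral>x. (cmod (u x * indicator (truncation_set u k) x))\<^sup>2 \<partial>lebesgue) \<longlonglongrightarrow> 0"
proof -
  have u_meas: "u \<in> borel_measurable lebesgue" using uL by (simp add: in_L2_def)
  note sets = truncation_set_sets[OF u_meas]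
  have "(\<lambda>k. indicator (truncation_set u k) x :: real) \<longlonglongrightarrow> 0" for x
    by (rule tendsto_eventually) (use eventually_notin_truncation_set[of x u] in \<open>eventually_elim, simp\<close>)
  then show "(\<lambda>k. BFS_norm \<rho> (\<lambda>x. u x * indicator (truncation_set u k) x)) \<longlonglongrightarrow> 0"
    using ac uX sets unfolding abs_cont_norm_def by blast
  have "(\<lambda>k. \<integral>x. (cmod (u x * indicator (truncation_set u k) x))\<^sup>2 \<partial>lebesgue)
      \<longlonglongrightarrow> (\<integral>x. 0 \<partial>(lebesgue::'a measure))"
  proof (rule integral_dominated_convergence[where w = "\<lambda>x. (cmod (u x))\<^sup>2"])
    show "integrable lebesgue (\<lambda>x. (cmod (u x))\<^sup>2)" using uL by (simp add: in_L2_def)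
    show "AE x in lebesgue. (\<lambda>k. (cmod (u x * indicator (truncation_set u k) x))\<^sup>2) \<longlonglongrightarrow> 0"
    proof (intro AE_I2 tendsto_eventually)
      show "eventually (\<lambda>k. (cmod (u x * indicator (truncation_set u k) x))\<^sup>2 = 0) sequentially" for x
        using eventually_notin_truncation_set[of x u] by eventually_elim simp
    qed
    show "AE x in lebesgue. norm ((cmod (u x * indicator (truncation_set u k) x))\<^sup>2) \<le> (cmod (u x))\<^sup>2" for k
      by (rule AE_I2) (auto simp: indicator_def)
  qed (use u_meas sets in measurable)
  then show "(\<lambda>k. \<integral>x. (cmod (u x * indicator (truncation_set u k) x))\<^sup>2 \<partial>lebesgue) \<longlonglongrightarrow> 0"
    by simp
qed

lemma truncation_close:
  fixes u :: "'a::euclidean_space \<Rightarrow> complex"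
  assumes ac: "abs_cont_norm \<rho>" and uL: "in_L2 u" and uX: "in_BFS \<rho> u" and "e > 0"
  shows "\<exists>f k. f \<in> borel_measurable lebesgue \<and> k > 0 \<and> (\<forall>x. cmod (f x) \<le> k) \<and>
    (\<forall>x. k < norm x \<longrightarrow> f x = 0) \<and> L2_BFS_close \<rho> e u f"
proof -
  have u_meas: "u \<in> borel_measurable lebesgue" using uL by (simp add: in_L2_def)
  note lim = truncation_error_tendsto_0[OF ac uL uX]
  have "eventually (\<lambda>k. BFS_norm \<rho> (\<lambda>x. u x * indicator (truncation_set u k) x) < ennreal e \<and>
      (\<integral>x. (cmod (u x * indicator (truncation_set u k) x))\<^sup>2 \<partial>lebesgue) < e) sequentially"
    using \<open>e > 0\<close> by (intro eventually_conj order_tendstoD[OF lim(1)] order_tendstoD[OF lim(2)]) auto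
  then obtain k where k: "BFS_norm \<rho> (\<lambda>x. u x * indicator (truncation_set u k) x) < ennreal e"
    "(\<integral>x. (cmod (u x * indicator (truncation_set u k) x))\<^sup>2 \<partial>lebesgue) < e"
    unfolding eventually_sequentially by blast
  define f where "f x = u x - u x * indicator (truncation_set u k) x" for x
  have "integrable lebesgue (\<lambda>x. (cmod (u x - f x))\<^sup>2)"
    by (rule integrable_square_bound[where w = "\<lambda>x. (cmod (u x))\<^sup>2"])
      (use u_meas truncation_set_sets[OF u_meas] uL in \<open>auto simp: f_def indicator_def in_L2_def\<close>)
  with k have "L2_BFS_close \<rho> e u f"
    unfolding L2_BFS_close_def by (simp add: f_def)
  moreover have "f \<in> borel_measurable lebesgue"
    unfolding f_def using u_meas truncation_set_sets[OF u_meas] by measurable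
  moreover have "cmod (f x) \<le> real k + 1" "real k + 1 < norm x \<Longrightarrow> f x = 0" for x
    by (auto simp: f_def truncation_set_def indicator_def)
  ultimately show ?thesis
    by (intro exI[of _ f] exI[of _ "real k + 1"]) auto
qed

lemma C0_inf_close:
  fixes \<rho> :: "('a::euclidean_space \<Rightarrow> ennreal) \<Rightarrow> ennreal"
  assumes bfn: "banach_function_norm \<rho>" and ac: "abs_cont_norm \<rho>"
    and uL: "in_L2 u" and uX: "in_BFS \<rho> u" and "e > 0"
  shows "\<exists>g. C0_inf g \<and> L2_BFS_close \<rho> e u g"
proof -
  obtain f k where f_meas: "f \<in> borel_measurable lebesgue" and "k > 0" and "\<And>x. cmod (f x) \<le> k"
    and "\<And>x. k < norm x \<Longrightarrow> f x = 0" and uf: "L2_BFS_close \<rho> (e / 4) u f"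
    using truncation_close[OF ac uL uX, of "e / 4"] \<open>e > 0\<close> by auto
  then obtain g where "C0_inf g" and fg: "L2_BFS_close \<rho> (e / 4) f g"
    using C0_inf_close_bounded[OF bfn ac f_meas, of k "e / 4"] \<open>e > 0\<close> by auto
  moreover have "u \<in> borel_measurable lebesgue" using uL by (simp add: in_L2_def)
  ultimately show ?thesis
    using L2_BFS_close_trans[OF bfn _ f_meas C0_inf_borel_measurable uf fg] by blast
qed

lemma L2_BFS_close_tendsto:
  assumes close: "\<And>j. L2_BFS_close \<rho> (inverse (real (Suc j))) u (U j)"
  shows "(\<lambda>j. L2_norm (\<lambda>x. u x - U j x)) \<longlonglongrightarrow> 0"
    and "(\<lambda>j. BFS_norm \<rho> (\<lambda>x. u x - U j x)) \<longlonglongrightarrow> 0"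
proof -
  have sqrt_lim: "(\<lambda>j. sqrt (inverse (real (Suc j)))) \<longlonglongrightarrow> 0"
    using tendsto_real_sqrt[OF LIMSEQ_inverse_real_of_nat] by simp
  show "(\<lambda>j. L2_norm (\<lambda>x. u x - U j x)) \<longlonglongrightarrow> 0"
  proof (rule tendsto_sandwich[OF _ _ tendsto_const sqrt_lim])
    show "\<forall>\<^sub>F j in sequentially. 0 \<le> L2_norm (\<lambda>x. u x - U j x)"
      by (simp add: L2_norm_def)
    have "(\<integral>x. (cmod (u x - U j x))\<^sup>2 \<partial>lebesgue) < inverse (real (Suc j))" for j
      using close[of j] unfolding L2_BFS_close_def by (elim conjE)
    then show "\<forall>\<^sub>F j in sequentially. L2_norm (\<lambda>x. u x - U j x) \<le> sqrt (inverse (real (Suc j)))"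
      unfolding L2_norm_def by (intro always_eventually allI real_sqrt_le_mono less_imp_le)
  qed
  have inverse_lim: "(\<lambda>j. ennreal (inverse (real (Suc j)))) \<longlonglongrightarrow> 0"
    using tendsto_ennrealI[OF LIMSEQ_inverse_real_of_nat] by simp
  show "(\<lambda>j. BFS_norm \<rho> (\<lambda>x. u x - U j x)) \<longlonglongrightarrow> 0"
  proof (rule tendsto_sandwich[OF _ _ tendsto_const inverse_lim])
    show "\<forall>\<^sub>F j in sequentially. BFS_norm \<rho> (\<lambda>x. u x - U j x) \<le> ennreal (inverse (real (Suc j)))"
      using close by (intro always_eventually allI) (simp add: L2_BFS_close_def less_imp_le)
  qed simp
qed

theorem theorem2p3:
  fixes \<rho> :: "('a::euclidean_space \<Rightarrow> ennreal) \<Rightarrow> ennreal"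
  assumes "banach_function_norm \<rho>"
    and "abs_cont_norm \<rho>"
  shows "bounded_L2_approx \<rho>"
  unfolding bounded_L2_approx_def
proof (intro allI impI, elim conjE)
  fix u :: "'a \<Rightarrow> complex"
  assume uL: "in_L2 u" and uX: "in_BFS \<rho> u"
  have "\<forall>j. \<exists>g. C0_inf g \<and> L2_BFS_close \<rho> (inverse (real (Suc j))) u g"
    using C0_inf_close[OF assms uL uX] by simp
  then obtain U where U_C0: "\<And>j. C0_inf (U j)"
    and U_close: "\<And>j. L2_BFS_close \<rho> (inverse (real (Suc j))) u (U j)"
    by metis
  have "limsup (\<lambda>j. BFS_norm \<rho> (U j)) \<le> BFS_norm \<rho> u"
    using limsup_BFS_norm_le[OF assms(1) _ C0_inf_borel_measurable[OF U_C0] L2_BFS_close_tendsto(2)[OF U_close]]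
      uL by (simp add: in_L2_def)
  with U_C0 L2_BFS_close_tendsto(1)[OF U_close]
  show "\<exists>U. (\<forall>j. C0_inf (U j)) \<and> (\<lambda>j. L2_norm (\<lambda>x. u x - U j x)) \<longlonglongrightarrow> 0 \<and>
      limsup (\<lambda>j. BFS_norm \<rho> (U j)) \<le> BFS_norm \<rho> u"
    by blast
qed

end
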